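(* Let $\beta>0$, $N\ge 4$, $\Lambda=(\mathbb{Z}/N\mathbb{Z})^2$ and $i,j\in\Lambda$ with $i\ne j$. Then for every $x\in\Omega_{i,j}$, \[ H_\Lambda(x)-H_\Lambda(F_{i,j}(x))\ge|\gamma_{i,j}(x)|. \] Moreover, for every $\gamma\in\Gamma_{i,j}$ and $k\in\mathbb{N}$, \[ P_{\Lambda,\beta}\big(x_i-x_j\ge k,\ \gamma_{i,j}(x)=\gamma\big)\le e^{-\beta|\gamma|}P_{\Lambda,\beta}(x_i-x_j\ge k-1), \] hence \[ P_{\Lambda,\beta}(x_i-x_j\ge k)\le P_{\Lambda,\beta}(x_i-x_j\ge k-1)\sum_{\gamma\in\Gamma_{i,j}}e^{-\beta|\gamma|}, \qquad P_{\Lambda,\beta}(x_i-x_j\ge k)\le\Big(\sum_{\gamma\in\Gamma_{i,j}}e^{-\beta|\gamma|}\Big)^k. \]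
   Context: $\Lambda=(\mathbb{Z}/N\mathbb{Z})^2$ is the $N\times N$ box with periodic boundary conditions containing $0$, $\mathcal{E}_\Lambda$ its nearest-neighbour edges. $\Omega_\Lambda=\{x\in\mathbb{Z}^\Lambda:x_0=0\}$, $H_\Lambda(x)=\sum_{\{l,m\}\in\mathcal{E}_\Lambda}(x_l-x_m)^2$, and $P_{\Lambda,\beta}=Z_{\Lambda,\beta}^{-1}\sum_{x\in\Omega_\Lambda}e^{-\beta H_\Lambda(x)}\delta_x$ with $Z_{\Lambda,\beta}=\sum_{x\in\Omega_\Lambda}e^{-\beta H_\Lambda(x)}$. Contours: let $\Lambda^*=\Lambda+(1/2,1/2)$ be the dual torus; each edge $\{l,m\}\in\mathcal{E}_\Lambda$ is crossed by a unique dual edge $\{l,m\}^*$. Let $\Omega_{i,j}=\{x\in\Omega_\Lambda:x_i>x_j\}$. For $x\in\Omega_{i,j}$ let $C_i$ be the connected component containing $i$ of $\{k\in\Lambda:x_k\ge x_i\}$, and $\partial C_i$ the set of dual edges $\{l,m\}^*$ with $l\in C_i$, $m\notin C_i$, oriented so that the vertex in $C_i$ lies to the left. Split $\partial C_i$ into closed self-avoiding dual contours (at a dual vertex where four boundary edges meet, use the North-West/South-East splitting rule). A contour winds around the torus iff the sum of its direction vectors is non-zero; exactly one of the following holds: (1) exactly one non-winding contour of $\partial C_i$ separates $i$ from $j$ (every nearest-neighbour path from $i$ to $j$ crosses an edge whose dual lies in it), and $\gamma_{i,j}(x)$ is this contour; or (2) $\partial C_i$ contains exactly two winding contours $\gamma_-,\gamma_+$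 whose union separates $i$ from $j$, and $\gamma_{i,j}(x):=\gamma_-\cup\gamma_+$. $|\gamma|$ denotes the number of dual edges of $\gamma$, and $\Gamma_{i,j}:=\{\gamma_{i,j}(x):x\in\Omega_{i,j}\}$. Let $\mathcal{L}_i(\gamma)$ be the set of $k\in\Lambda$ not separated from $i$ by $\gamma$. Define $F_{i,j}:\Omega_{i,j}\to\Omega_\Lambda$ by $F_{i,j}(x)_l=x_l-\mathbf{1}_{\mathcal{L}_i(\gamma_{i,j}(x))}(l)-x_0+\mathbf{1}_{\mathcal{L}_i(\gamma_{i,j}(x))}(0)$. *)

theory Defs
  imports "HOL-Analysis.Analysis"
begin

text \<open>A dual vertex (a,b) represents the point (a+1/2, b+1/2) of the dual torus.\<close>

type_synonym vert = "nat \<times> nat"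

definition torus :: "nat \<Rightarrow> vert set" where
  "torus N = {0..<N} \<times> {0..<N}"

definition units :: "(int \<times> int) set" where
  "units = {(1,0), (-1,0), (0,1), (0,-1)}"

definition negv :: "int \<times> int \<Rightarrow> int \<times> int" where
  "negv d = (- fst d, - snd d)"

text \<open>translation on the torus (also used for the dual torus)\<close>
definition shiftv :: "nat \<Rightarrow> vert \<Rightarrow> int \<times> int \<Rightarrow> vert" where
  "shiftv N v d = (nat ((int (fst v) + fst d) mod int N), nat ((int (snd v) + snd d) mod int N))"

definition nn_adj :: "nat \<Rightarrow> vert \<Rightarrow> vert \<Rightarrow> bool" where
  "nn_adj N l m \<longleftrightarrow> l \<in> torus N \<and> (\<exists>d\<in>units. m = shiftv N l d)"

definition edges :: "nat \<Rightarrow> vert set set" where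
  "edges N = {{l, m} | l m. nn_adj N l m}"

text \<open>Hamiltonian: for an edge e = {l,m}, (x_l - x_m)^2 = (max - min)^2 over x`e.\<close>
definition H :: "nat \<Rightarrow> (vert \<Rightarrow> int) \<Rightarrow> int" where
  "H N x = (\<Sum>e\<in>edges N. (Max (x ` e) - Min (x ` e))^2)"

definition Omega :: "nat \<Rightarrow> (vert \<Rightarrow> int) set" where
  "Omega N = {x. x (0,0) = 0 \<and> (\<forall>v. v \<notin> torus N \<longrightarrow> x v = 0)}"

definition gw :: "nat \<Rightarrow> real \<Rightarrow> (vert \<Rightarrow> int) \<Rightarrow> real" where
  "gw N \<beta> x = exp (- \<beta> * real_of_int (H N x))"

definition Zpart :: "nat \<Rightarrow> real \<Rightarrow> real" where
  "Zpart N \<beta> = infsum (gw N \<beta>) (Omega N)"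

definition Prob :: "nat \<Rightarrow> real \<Rightarrow> (vert \<Rightarrow> int) set \<Rightarrow> real" where
  "Prob N \<beta> A = infsum (gw N \<beta>) (Omega N \<inter> A) / Zpart N \<beta>"

definition Omega_ij :: "nat \<Rightarrow> vert \<Rightarrow> vert \<Rightarrow> (vert \<Rightarrow> int) set" where
  "Omega_ij N i j = {x \<in> Omega N. x i > x j}"

definition comp :: "nat \<Rightarrow> (vert \<Rightarrow> int) \<Rightarrow> vert \<Rightarrow> vert set" where
  "comp N x i = {k \<in> torus N.
     (\<lambda>a b. nn_adj N a b \<and> x a \<ge> x i \<and> x b \<ge> x i)\<^sup>*\<^sup>* i k}"

text \<open>Oriented dual edges are pairs (s, t): start dual vertex s, unit direction t;
  the end vertex is shiftv N s t. The dual of the primal edge from l to l+d,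
  oriented so that l lies to its left.\<close>
type_synonym dedge = "vert \<times> (int \<times> int)"

definition dualedge :: "nat \<Rightarrow> vert \<Rightarrow> int \<times> int \<Rightarrow> dedge" where
  "dualedge N l d =
     (shiftv N l ((fst d + snd d - 1) div 2, (snd d - fst d - 1) div 2), (- snd d, fst d))"

definition dend :: "nat \<Rightarrow> dedge \<Rightarrow> vert" where
  "dend N e = shiftv N (fst e) (snd e)"

definition bdry :: "nat \<Rightarrow> (vert \<Rightarrow> int) \<Rightarrow> vert \<Rightarrow> dedge set" where
  "bdry N x i = {dualedge N l d | l d. l \<in> comp N x i \<and> d \<in> units \<and> shiftv N l d \<notin> comp N x i}"

text \<open>Successor of a boundary edge: the unique outgoing boundary edge at its endpoint,
  or, when four boundary edges meet, the one given by the North-West/South-East rule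
  (the North side is paired with the West side, the South side with the East side).\<close>
definition dsucc :: "nat \<Rightarrow> dedge set \<Rightarrow> dedge \<Rightarrow> dedge" where
  "dsucc N B e = (let v = dend N e; Out = {e'\<in>B. fst e' = v} in
     if card Out = 1 then the_elem Out else (v, (snd (snd e), fst (snd e))))"

definition contours :: "nat \<Rightarrow> dedge set \<Rightarrow> dedge set set" where
  "contours N B = {{(dsucc N B ^^ n) e | n. True} | e. e \<in> B}"

definition winding :: "dedge set \<Rightarrow> bool" where
  "winding c \<longleftrightarrow> (\<Sum>e\<in>c. snd e) \<noteq> (0, 0)"

definition avoid :: "nat \<Rightarrow> dedge set \<Rightarrow> vert \<Rightarrow> vert \<Rightarrow> bool" where
  "avoid N g a b \<longleftrightarrow> a \<in> torus N \<and> (\<exists>d\<in>units. b = shiftv N a d \<and>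
       dualedge N a d \<notin> g \<and> dualedge N b (negv d) \<notin> g)"

definition separates :: "nat \<Rightarrow> dedge set \<Rightarrow> vert \<Rightarrow> vert \<Rightarrow> bool" where
  "separates N g i j \<longleftrightarrow> \<not> (avoid N g)\<^sup>*\<^sup>* i j"

definition Lset :: "nat \<Rightarrow> dedge set \<Rightarrow> vert \<Rightarrow> vert set" where
  "Lset N g i = {k \<in> torus N. (avoid N g)\<^sup>*\<^sup>* i k}"

definition gamma :: "nat \<Rightarrow> vert \<Rightarrow> vert \<Rightarrow> (vert \<Rightarrow> int) \<Rightarrow> dedge set" where
  "gamma N i j x = (let Cs = contours N (bdry N x i) in
     if (\<exists>!c. c \<in> Cs \<and> \<not> winding c \<and> separates N c i j)
     then (THE c. c \<in> Cs \<and> \<not> winding c \<and> separates N c i j)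
     else \<Union>{c \<in> Cs. winding c})"

definition Gamma :: "nat \<Rightarrow> vert \<Rightarrow> vert \<Rightarrow> dedge set set" where
  "Gamma N i j = gamma N i j ` Omega_ij N i j"

definition F :: "nat \<Rightarrow> vert \<Rightarrow> vert \<Rightarrow> (vert \<Rightarrow> int) \<Rightarrow> (vert \<Rightarrow> int)" where
  "F N i j x = (\<lambda>l. if l \<in> torus N then
      x l - of_bool (l \<in> Lset N (gamma N i j x) i) - x (0,0)
          + of_bool ((0,0) \<in> Lset N (gamma N i j x) i)
    else 0)"

end

theory Submission
  imports Defs
begin

(* The successor map on the boundary of C_i is a permutation, so the boundary
   splits into closed contours, and gamma is a union of contours whose direction vectors sum
   to zero.  The number of times an edge of the torus is crossed outwards by gamma minus the
   number of times it is crossed inwards is then a closed integer 1-form with vanishing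
   periods, hence the differential of an integer potential.  The potential is constant on
   L_i and jumps by one across every edge of gamma, so each edge of gamma is crossed from
   L_i to its complement, i.e. from C_i (where x >= x_i) to outside C_i (where x < x_i).
   Lowering x by one on L_i therefore lowers the energy of each of these |gamma| edges by
   at least one and raises no edge energy.  Since F is injective on {gamma = g} and maps
   {x_i - x_j >= k} into {x_i - x_j >= k - 1}, comparing Gibbs weights gives the second
   bound; summing over g and iterating gives the last two. *)

section \<open>Arithmetic on the discrete torus\<close>

lemma mem_torus_iff: "v \<in> torus N \<longleftrightarrow> fst v < N \<and> snd v < N"
  by (cases v) (auto simp: torus_def)

lemma finite_torus: "finite (torus N)"
  by (simp add: torus_def)

lemma finite_units: "finite units"
  by (simp add: units_def)

lemma mem_units_iff: "d \<in> units \<longleftrightarrow> d = (1,0) \<or> d = (-1,0) \<or> d = (0,1) \<or> d = (0,-1)"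
  by (auto simp: units_def)

lemma sum_units: "(\<Sum>d\<in>units. f d) = f (1,0) + f (-1,0) + f (0,1) + f (0,-1)"
  by (simp add: units_def add.assoc)

lemma negv_in_units: "d \<in> units \<Longrightarrow> negv d \<in> units"
  by (auto simp: mem_units_iff negv_def)

lemma sum_torus_swap: "(\<Sum>l\<in>torus N. f l) = (\<Sum>b<N. \<Sum>a<N. f (a,b))"
proof -
  have "(\<Sum>l\<in>torus N. f l) = (\<Sum>a<N. \<Sum>b<N. f (a,b))"
    unfolding torus_def lessThan_atLeast0
    by (simp only: sum.cartesian_product split_beta' fst_conv snd_conv prod.collapse)
  also have "\<dots> = (\<Sum>b<N. \<Sum>a<N. f (a,b))"
    by (rule sum.swap)
  finally show ?thesis .
qed

lemma shiftv_in_torus: "0 < N \<Longrightarrow> shiftv N v d \<in> torus N"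
  unfolding shiftv_def mem_torus_iff by (simp add: nat_less_iff)

lemma shiftv_shiftv:
  "0 < N \<Longrightarrow> shiftv N (shiftv N v d) e = shiftv N v (fst d + fst e, snd d + snd e)"
  unfolding shiftv_def by (simp add: mod_add_left_eq add.assoc)

lemma shiftv_zero: "v \<in> torus N \<Longrightarrow> shiftv N v (0,0) = v"
  unfolding shiftv_def mem_torus_iff by (cases v) auto

lemma shiftv_eq_iff:
  assumes "0 < N" "v \<in> torus N" "w \<in> torus N"
  shows "shiftv N v d = w \<longleftrightarrow> v = shiftv N w (- fst d, - snd d)"
proof
  assume "shiftv N v d = w"
  then have "shiftv N w (- fst d, - snd d) = shiftv N v (0,0)"
    using shiftv_shiftv[OF assms(1), of v d "(- fst d, - snd d)"] by simp
  then show "v = shiftv N w (- fst d, - snd d)"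
    using shiftv_zero[OF assms(2)] by simp
next
  assume "v = shiftv N w (- fst d, - snd d)"
  then have "shiftv N v d = shiftv N w (0,0)"
    using shiftv_shiftv[OF assms(1), of w "(- fst d, - snd d)" d] by simp
  then show "shiftv N v d = w"
    using shiftv_zero[OF assms(3)] by simp
qed

lemma inj_on_shiftv: "0 < N \<Longrightarrow> inj_on (\<lambda>v. shiftv N v d) (torus N)"
  by (rule inj_onI) (metis shiftv_eq_iff shiftv_in_torus)

lemma bij_betw_shiftv: "0 < N \<Longrightarrow> bij_betw (\<lambda>v. shiftv N v d) (torus N) (torus N)"
  by (simp add: bij_betw_def inj_on_shiftv endo_inj_surj finite_torus image_subsetI shiftv_in_torus)

lemma sum_shiftv: "0 < N \<Longrightarrow> (\<Sum>l\<in>torus N. f (shiftv N l d)) = (\<Sum>l\<in>torus N. f l)"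
  using sum.reindex_bij_betw[OF bij_betw_shiftv] .

lemma shiftv_of_nat: "shiftv N (a,b) (int c, int d) = ((a + c) mod N, (b + d) mod N)"
  unfolding shiftv_def by (simp add: of_nat_mod[symmetric] del: of_nat_add add: of_nat_add[symmetric])

lemma shiftv_east: "shiftv N (a,b) (1,0) = (Suc a mod N, b mod N)"
  using shiftv_of_nat[of N a b 1 0] by simp

lemma shiftv_north: "shiftv N (a,b) (0,1) = (a mod N, Suc b mod N)"
  using shiftv_of_nat[of N a b 0 1] by simp

lemma sum_Suc_mod: "(\<Sum>a<N. f (Suc a mod N)) = (\<Sum>a<N. f a)"
proof -
  have "inj_on (\<lambda>a. Suc a mod N) {..<N}"
    by (rule inj_onI) (auto simp: mod_if split: if_splits)
  moreover have "(\<lambda>a. Suc a mod N) ` {..<N} = {..<N}"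
    using calculation by (intro endo_inj_surj) auto
  ultimately have "bij_betw (\<lambda>a. Suc a mod N) {..<N} {..<N}"
    by (simp add: bij_betw_def)
  then show ?thesis
    using sum.reindex_bij_betw by blast
qed

lemma eq_if_mod_eq_small_diff:
  fixes a b c :: int
  assumes "3 \<le> N" "(a + b) mod int N = (a + c) mod int N" "\<bar>b - c\<bar> \<le> 2"
  shows "b = c"
proof -
  have "int N dvd (a + b) - (a + c)"
    using assms(2) by (simp add: mod_eq_dvd_iff)
  then obtain k where k: "b - c = int N * k"
    by (auto simp: dvd_def)
  have "k = 0"
  proof (rule ccontr)
    assume "k \<noteq> 0"
    then have "int N * 1 \<le> int N * \<bar>k\<bar>"
      by (intro mult_left_mono) auto
    then have "int N \<le> \<bar>int N * k\<bar>"
      by (simp add: abs_mult)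
    then show False
      using k assms(1,3) by linarith
  qed
  then show ?thesis
    using k by simp
qed

lemma shiftv_units_inj:
  assumes "3 \<le> N" "d \<in> units" "d' \<in> units" "shiftv N v d = shiftv N v d'"
  shows "d = d'"
proof -
  have fst: "(int (fst v) + fst d) mod int N = (int (fst v) + fst d') mod int N"
    and snd: "(int (snd v) + snd d) mod int N = (int (snd v) + snd d') mod int N"
    using assms(1,4) unfolding shiftv_def by (simp_all add: eq_nat_nat_iff)
  have "\<bar>fst d - fst d'\<bar> \<le> 2" "\<bar>snd d - snd d'\<bar> \<le> 2"
    using assms(2,3) by (auto simp: mem_units_iff)
  then have "fst d = fst d'" "snd d = snd d'"
    using eq_if_mod_eq_small_diff[OF assms(1) fst] eq_if_mod_eq_small_diff[OF assms(1) snd] by auto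
  then show ?thesis
    by (simp add: prod_eq_iff)
qed

lemma dualedge_east: "dualedge N l (1,0) = (shiftv N l (0,-1), (0,1))"
  and dualedge_west: "dualedge N l (-1,0) = (shiftv N l (-1,0), (0,-1))"
  and dualedge_north: "dualedge N l (0,1) = (shiftv N l (0,0), (-1,0))"
  and dualedge_south: "dualedge N l (0,-1) = (shiftv N l (-1,-1), (1,0))"
  by (simp_all add: dualedge_def)

lemmas dualedge_simps = dualedge_east dualedge_west dualedge_north dualedge_south

lemma snd_dualedge: "snd (dualedge N l d) = (- snd d, fst d)"
  by (simp add: dualedge_def)

locale discrete_torus =
  fixes N :: nat
  assumes N_ge_3: "3 \<le> N"
begin

lemma N_pos: "0 < N"
  using N_ge_3 by simp

lemma shiftv_shiftv_pairs [simp]: "shiftv N (shiftv N v (a,b)) (c,d) = shiftv N v (a + c, b + d)"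
  using shiftv_shiftv[OF N_pos, of v "(a,b)" "(c,d)"] by simp

lemmas [simp] = shiftv_in_torus[OF N_pos] shiftv_zero[OF shiftv_in_torus[OF N_pos]]

lemma shiftv_negv: "v \<in> torus N \<Longrightarrow> shiftv N (shiftv N v d) (negv d) = v"
  using shiftv_shiftv[OF N_pos, of v d "negv d"] shiftv_zero by (simp add: negv_def)

lemma dualedge_inj:
  assumes "l \<in> torus N" "l' \<in> torus N" "dualedge N l d = dualedge N l' d'"
  shows "l = l' \<and> d = d'"
proof -
  have "d = d'"
    using assms(3) unfolding dualedge_def by (auto simp: prod_eq_iff)
  moreover from this have "l = l'"
    using assms inj_onD[OF inj_on_shiftv[OF N_pos]] unfolding dualedge_def by simp
  ultimately show ?thesis
    by simp
qed

lemma inj_on_dualedge: "inj_on (\<lambda>(l,d). dualedge N l d) (torus N \<times> units)"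
  by (rule inj_onI) (auto dest: dualedge_inj)

lemma fst_dualedge_in_torus: "fst (dualedge N l d) \<in> torus N"
  by (simp add: dualedge_def)

lemma fst_dualedge_eq_iff:
  assumes "l \<in> torus N" "d \<in> units" "v \<in> torus N"
  shows "fst (dualedge N l d) = v \<longleftrightarrow>
    (d = (0,1) \<and> l = v) \<or> (d = (1,0) \<and> l = shiftv N v (0,1)) \<or>
    (d = (-1,0) \<and> l = shiftv N v (1,0)) \<or> (d = (0,-1) \<and> l = shiftv N v (1,1))"
proof -
  note eq = shiftv_eq_iff[OF N_pos assms(1,3)]
  from assms(2) consider "d = (1,0)" | "d = (-1,0)" | "d = (0,1)" | "d = (0,-1)"
    by (auto simp: mem_units_iff)
  then show ?thesis
  proof cases
    case 1
    then show ?thesis using eq[of "(0,-1)"] by (simp add: dualedge_east)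
  next
    case 2
    then show ?thesis using eq[of "(-1,0)"] by (simp add: dualedge_west)
  next
    case 3
    then show ?thesis using shiftv_zero[OF assms(1)] by (simp add: dualedge_north)
  next
    case 4
    then show ?thesis using eq[of "(-1,-1)"] by (simp add: dualedge_south)
  qed
qed

lemma dend_dualedge:
  assumes "l \<in> torus N"
  shows "dend N (dualedge N l (1,0)) = l" "dend N (dualedge N l (-1,0)) = shiftv N l (-1,-1)"
    "dend N (dualedge N l (0,1)) = shiftv N l (-1,0)" "dend N (dualedge N l (0,-1)) = shiftv N l (0,-1)"
  using shiftv_zero[OF assms] by (auto simp: dend_def dualedge_simps)

lemma dend_dualedge_eq_iff:
  assumes "l \<in> torus N" "d \<in> units" "v \<in> torus N"
  shows "dend N (dualedge N l d) = v \<longleftrightarrow>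
    (d = (1,0) \<and> l = v) \<or> (d = (0,1) \<and> l = shiftv N v (1,0)) \<or>
    (d = (-1,0) \<and> l = shiftv N v (1,1)) \<or> (d = (0,-1) \<and> l = shiftv N v (0,1))"
proof -
  note eq = shiftv_eq_iff[OF N_pos assms(1,3)]
  from assms(2) consider "d = (1,0)" | "d = (-1,0)" | "d = (0,1)" | "d = (0,-1)"
    by (auto simp: mem_units_iff)
  then show ?thesis
  proof cases
    case 1
    then show ?thesis using dend_dualedge[OF assms(1)] by simp
  next
    case 2
    then show ?thesis using dend_dualedge[OF assms(1)] eq[of "(-1,-1)"] by simp
  next
    case 3
    then show ?thesis using dend_dualedge[OF assms(1)] eq[of "(-1,0)"] by simp
  next
    case 4
    then show ?thesis using dend_dualedge[OF assms(1)] eq[of "(0,-1)"] by simp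
  qed
qed

lemma dend_in_torus: "dend N e \<in> torus N"
  by (simp add: dend_def)

end

section \<open>Orbits of an injective self-map of a finite set\<close>

definition forward_orbit :: "('a \<Rightarrow> 'a) \<Rightarrow> 'a \<Rightarrow> 'a set" where
  "forward_orbit f e = range (\<lambda>n. (f ^^ n) e)"

lemma funpow_mem: "f ` S \<subseteq> S \<Longrightarrow> e \<in> S \<Longrightarrow> (f ^^ n) e \<in> S"
  by (induction n) auto

lemma self_in_forward_orbit: "e \<in> forward_orbit f e"
  unfolding forward_orbit_def by (rule range_eqI[of _ _ 0]) simp

lemma forward_orbit_subset: "f ` S \<subseteq> S \<Longrightarrow> e \<in> S \<Longrightarrow> forward_orbit f e \<subseteq> S"
  using funpow_mem[of f S e] by (auto simp: forward_orbit_def)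

lemma forward_orbit_closed: "f ` forward_orbit f e \<subseteq> forward_orbit f e"
proof
  fix y
  assume "y \<in> f ` forward_orbit f e"
  then obtain n where "y = (f ^^ Suc n) e"
    unfolding forward_orbit_def by auto
  then show "y \<in> forward_orbit f e"
    unfolding forward_orbit_def by blast
qed

lemma forward_orbit_mono:
  assumes "a \<in> forward_orbit f e"
  shows "forward_orbit f a \<subseteq> forward_orbit f e"
proof
  fix y
  assume "y \<in> forward_orbit f a"
  then obtain n m where "a = (f ^^ n) e" "y = (f ^^ m) a"
    using assms unfolding forward_orbit_def by blast
  then have "y = (f ^^ (m + n)) e"
    by (simp add: funpow_add)
  then show "y \<in> forward_orbit f e"
    unfolding forward_orbit_def by blast
qed

lemma funpow_cancel:
  assumes "f ` S \<subseteq> S" "inj_on f S" "a \<in> S" "b \<in> S" "(f ^^ m) a = (f ^^ m) b"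
  shows "a = b"
  using assms(5)
proof (induction m)
  case (Suc m)
  then show ?case
    using inj_onD[OF assms(2)] funpow_mem[OF assms(1)] assms(3,4) by simp
qed simp

lemma funpow_periodic:
  assumes "finite S" "f ` S \<subseteq> S" "inj_on f S" "e \<in> S"
  obtains p where "0 < p" "(f ^^ p) e = e"
proof -
  have "range (\<lambda>n. (f ^^ n) e) \<subseteq> S"
    using funpow_mem[OF assms(2,4)] by blast
  then have "\<not> inj (\<lambda>n::nat. (f ^^ n) e)"
    using assms(1) finite_subset infinite_UNIV_nat finite_imageD by blast
  then obtain m n :: nat where "m \<noteq> n" "(f ^^ m) e = (f ^^ n) e"
    unfolding inj_def by blast
  then obtain m n :: nat where mn: "m < n" "(f ^^ m) e = (f ^^ n) e"
    by (metis linorder_neqE_nat)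
  moreover have "(f ^^ n) e = (f ^^ m) ((f ^^ (n - m)) e)"
    using mn(1) by (metis funpow_add comp_apply le_add_diff_inverse less_imp_le)
  ultimately have "(f ^^ m) e = (f ^^ m) ((f ^^ (n - m)) e)"
    by simp
  then have "e = (f ^^ (n - m)) e"
    using funpow_cancel[OF assms(2,3,4) funpow_mem[OF assms(2,4)]] by blast
  then show thesis
    using that[of "n - m"] mn(1) by simp
qed

lemma mem_forward_orbit_sym:
  assumes "finite S" "f ` S \<subseteq> S" "inj_on f S" "e \<in> S" "a \<in> forward_orbit f e"
  shows "e \<in> forward_orbit f a"
proof -
  obtain n where a: "a = (f ^^ n) e"
    using assms(5) unfolding forward_orbit_def by blast
  obtain p where p: "0 < p" "(f ^^ p) e = e"
    using funpow_periodic[OF assms(1-4)] .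
  have "(f ^^ (n * p)) e = e"
    using p(2) by (induction n) (simp_all add: funpow_add)
  moreover have "n * p = (n * p - n) + n"
    using p(1) by simp
  ultimately have "(f ^^ (n * p - n)) a = e"
    unfolding a by (metis funpow_add comp_apply)
  then show ?thesis
    unfolding forward_orbit_def by (metis rangeI)
qed

lemma forward_orbits_disjoint:
  assumes "finite S" "f ` S \<subseteq> S" "inj_on f S" "a \<in> S" "b \<in> S"
    "forward_orbit f a \<noteq> forward_orbit f b"
  shows "forward_orbit f a \<inter> forward_orbit f b = {}"
proof (rule ccontr)
  assume "forward_orbit f a \<inter> forward_orbit f b \<noteq> {}"
  then obtain y where "y \<in> forward_orbit f a" "y \<in> forward_orbit f b"
    by blast
  then have "forward_orbit f y = forward_orbit f a" "forward_orbit f y = forward_orbit f b"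
    using assms(1-5) mem_forward_orbit_sym forward_orbit_mono by (metis subset_antisym)+
  then show False
    using assms(6) by simp
qed

lemma card_ending_eq_card_starting:
  assumes "finite G" "inj_on f G" "f ` G \<subseteq> G" "\<And>e. e \<in> G \<Longrightarrow> start (f e) = stop e"
  shows "card {e\<in>G. stop e = v} = card {e\<in>G. start e = v}"
proof -
  have surj: "f ` G = G"
    using assms(1-3) by (simp add: endo_inj_surj)
  have image: "f ` {e\<in>G. stop e = v} = {e\<in>G. start e = v}"
  proof
    show "f ` {e\<in>G. stop e = v} \<subseteq> {e\<in>G. start e = v}"
      using assms(3,4) by auto
    show "{e\<in>G. start e = v} \<subseteq> f ` {e\<in>G. stop e = v}"
    proof
      fix y
      assume y: "y \<in> {e\<in>G. start e = v}"
      then obtain e where "e \<in> G" "y = f e"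
        using surj by blast
      then show "y \<in> f ` {e\<in>G. stop e = v}"
        using y assms(4) by auto
    qed
  qed
  have "inj_on f {e\<in>G. stop e = v}"
    using assms(2) by (rule inj_on_subset) auto
  then show ?thesis
    using card_image image by fastforce
qed

section \<open>The boundary of C_i and its successor map\<close>

locale level_component = discrete_torus +
  fixes x :: "vert \<Rightarrow> int" and i :: vert
  assumes i_in_torus: "i \<in> torus N"
begin

abbreviation "C \<equiv> comp N x i"
abbreviation "B \<equiv> bdry N x i"

lemma comp_subset_torus: "C \<subseteq> torus N"
  by (auto simp: comp_def)

lemma self_in_comp: "i \<in> C"
  using i_in_torus by (auto simp: comp_def)

lemma comp_ge:
  assumes "k \<in> C"
  shows "x i \<le> x k"
proof -
  have "(\<lambda>a b. nn_adj N a b \<and> x a \<ge> x i \<and> x b \<ge> x i)\<^sup>*\<^sup>* i k"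
    using assms by (auto simp: comp_def)
  then show ?thesis
    by (induction rule: rtranclp_induct) auto
qed

lemma comp_step:
  assumes "a \<in> C" "d \<in> units" "x i \<le> x (shiftv N a d)"
  shows "shiftv N a d \<in> C"
proof -
  have "(\<lambda>a b. nn_adj N a b \<and> x a \<ge> x i \<and> x b \<ge> x i)\<^sup>*\<^sup>* i a"
    using assms by (auto simp: comp_def)
  moreover have "nn_adj N a (shiftv N a d)"
    using assms comp_subset_torus by (auto simp: nn_adj_def)
  ultimately have "(\<lambda>a b. nn_adj N a b \<and> x a \<ge> x i \<and> x b \<ge> x i)\<^sup>*\<^sup>* i (shiftv N a d)"
    using comp_ge[OF assms(1)] assms(3) by (auto intro: rtranclp.rtrancl_into_rtrancl)
  then show ?thesis
    by (auto simp: comp_def)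
qed

lemma less_if_leaves_comp:
  assumes "l \<in> C" "d \<in> units" "shiftv N l d \<notin> C"
  shows "x (shiftv N l d) < x l"
  using comp_step[OF assms(1,2)] comp_ge[OF assms(1)] assms(3) by fastforce

lemma dualedge_in_bdry_iff:
  assumes "l \<in> torus N" "d \<in> units"
  shows "dualedge N l d \<in> B \<longleftrightarrow> l \<in> C \<and> shiftv N l d \<notin> C"
proof
  assume "dualedge N l d \<in> B"
  then obtain l' d' where "l' \<in> C" "shiftv N l' d' \<notin> C" "dualedge N l d = dualedge N l' d'"
    by (auto simp: bdry_def)
  then show "l \<in> C \<and> shiftv N l d \<notin> C"
    using dualedge_inj[OF assms(1)] comp_subset_torus by blast
next
  assume "l \<in> C \<and> shiftv N l d \<notin> C"
  then show "dualedge N l d \<in> B"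
    using assms unfolding bdry_def by blast
qed

lemma bdry_elem:
  assumes "e \<in> B"
  obtains l d where "l \<in> C" "d \<in> units" "shiftv N l d \<notin> C" "e = dualedge N l d"
  using assms unfolding bdry_def by blast

lemma bdry_subset: "B \<subseteq> torus N \<times> units"
proof
  fix e
  assume "e \<in> B"
  then obtain l d where "d \<in> units" "e = dualedge N l d"
    by (rule bdry_elem)
  then show "e \<in> torus N \<times> units"
    by (auto simp: mem_Times_iff fst_dualedge_in_torus snd_dualedge mem_units_iff)
qed

lemma finite_bdry: "finite B"
  using bdry_subset finite_torus finite_units finite_subset by blast

lemma bdry_subset_dualedge_image: "B \<subseteq> (\<lambda>(l,d). dualedge N l d) ` (torus N \<times> units)"
proof
  fix e
  assume "e \<in> B"
  then obtain l d where "l \<in> C" "d \<in> units" "e = dualedge N l d"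
    by (rule bdry_elem)
  then show "e \<in> (\<lambda>(l,d). dualedge N l d) ` (torus N \<times> units)"
    using comp_subset_torus by (intro rev_image_eqI[of "(l,d)"]) auto
qed

text \<open>The boundary edges starting at a dual vertex v, i.e. at the centre of the square with
  lower left corner v, are determined by which of the four corners lie in C.\<close>

definition out_dir :: "vert \<Rightarrow> int \<times> int \<Rightarrow> bool" where
  "out_dir v t \<longleftrightarrow>
     (t = (-1,0) \<and> v \<in> C \<and> shiftv N v (0,1) \<notin> C) \<or>
     (t = (0,1) \<and> shiftv N v (0,1) \<in> C \<and> shiftv N v (1,1) \<notin> C) \<or>
     (t = (0,-1) \<and> shiftv N v (1,0) \<in> C \<and> v \<notin> C) \<or>
     (t = (1,0) \<and> shiftv N v (1,1) \<in> C \<and> shiftv N v (1,0) \<notin> C)"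

definition in_dir :: "vert \<Rightarrow> int \<times> int \<Rightarrow> bool" where
  "in_dir v t \<longleftrightarrow>
     (t = (0,1) \<and> v \<in> C \<and> shiftv N v (1,0) \<notin> C) \<or>
     (t = (-1,0) \<and> shiftv N v (1,0) \<in> C \<and> shiftv N v (1,1) \<notin> C) \<or>
     (t = (0,-1) \<and> shiftv N v (1,1) \<in> C \<and> shiftv N v (0,1) \<notin> C) \<or>
     (t = (1,0) \<and> shiftv N v (0,1) \<in> C \<and> v \<notin> C)"

lemma out_dir_if_starting_bdry:
  assumes v: "v \<in> torus N" and e: "e \<in> B" "fst e = v"
  shows "out_dir v (snd e)"
proof -
  obtain l d where l: "l \<in> C" "d \<in> units" "shiftv N l d \<notin> C" "e = dualedge N l d"
    using bdry_elem e(1) by blast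
  have "l \<in> torus N"
    using l comp_subset_torus by auto
  then have "(d = (0,1) \<and> l = v) \<or> (d = (1,0) \<and> l = shiftv N v (0,1)) \<or>
      (d = (-1,0) \<and> l = shiftv N v (1,0)) \<or> (d = (0,-1) \<and> l = shiftv N v (1,1))"
    using fst_dualedge_eq_iff[OF _ l(2) v] e l(4) by simp
  then show ?thesis
    using l shiftv_zero[OF v] unfolding out_dir_def by (auto simp: dualedge_simps)
qed

lemma in_bdry_if_out_dir:
  assumes v: "v \<in> torus N" and "out_dir v t"
  shows "(v, t) \<in> B"
proof -
  from assms(2) consider "t = (-1,0)" "v \<in> C" "shiftv N v (0,1) \<notin> C"
    | "t = (0,1)" "shiftv N v (0,1) \<in> C" "shiftv N v (1,1) \<notin> C"
    | "t = (0,-1)" "shiftv N v (1,0) \<in> C" "v \<notin> C"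
    | "t = (1,0)" "shiftv N v (1,1) \<in> C" "shiftv N v (1,0) \<notin> C"
    unfolding out_dir_def by blast
  then show ?thesis
  proof cases
    case 1
    then show ?thesis
      using dualedge_in_bdry_iff[OF v, of "(0,1)"] shiftv_zero[OF v]
      by (simp add: dualedge_north mem_units_iff)
  next
    case 2
    then show ?thesis
      using dualedge_in_bdry_iff[of "shiftv N v (0,1)" "(1,0)"] shiftv_zero[OF v]
      by (simp add: dualedge_east mem_units_iff)
  next
    case 3
    then show ?thesis
      using dualedge_in_bdry_iff[of "shiftv N v (1,0)" "(-1,0)"] shiftv_zero[OF v]
      by (simp add: dualedge_west mem_units_iff)
  next
    case 4
    then show ?thesis
      using dualedge_in_bdry_iff[of "shiftv N v (1,1)" "(0,-1)"] shiftv_zero[OF v]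
      by (simp add: dualedge_south mem_units_iff)
  qed
qed

lemma starting_bdry_iff:
  assumes v: "v \<in> torus N"
  shows "e \<in> B \<and> fst e = v \<longleftrightarrow> fst e = v \<and> out_dir v (snd e)"
  using out_dir_if_starting_bdry[OF v] in_bdry_if_out_dir[OF v, of "snd e"] by (cases e) auto

lemma in_dir_if_ending_bdry:
  assumes v: "v \<in> torus N" and e: "e \<in> B" "dend N e = v"
  shows "in_dir v (snd e)"
proof -
  obtain l d where l: "l \<in> C" "d \<in> units" "shiftv N l d \<notin> C" "e = dualedge N l d"
    using bdry_elem e by blast
  have "l \<in> torus N"
    using l comp_subset_torus by auto
  then have "(d = (1,0) \<and> l = v) \<or> (d = (0,1) \<and> l = shiftv N v (1,0)) \<or>
      (d = (-1,0) \<and> l = shiftv N v (1,1)) \<or> (d = (0,-1) \<and> l = shiftv N v (0,1))"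
    using dend_dualedge_eq_iff[OF _ l(2) v] e l(4) by simp
  then show ?thesis
    using l shiftv_zero[OF v] unfolding in_dir_def by (auto simp: dualedge_simps)
qed

lemma fst_dend_bdry:
  assumes "e \<in> B"
  shows "fst e = shiftv N (dend N e) (- fst (snd e), - snd (snd e))"
proof -
  have "fst e \<in> torus N"
    using bdry_subset assms by auto
  then show ?thesis
    using shiftv_eq_iff[OF N_pos _ dend_in_torus, of "fst e" "snd e" e] by (simp add: dend_def)
qed

lemma card_starting_bdry:
  assumes v: "v \<in> torus N"
  shows "card {e\<in>B. fst e = v} = card {t. out_dir v t}"
proof -
  have "{e\<in>B. fst e = v} = (\<lambda>t. (v,t)) ` {t. out_dir v t}"
    using starting_bdry_iff[OF v] by force
  then show ?thesis
    by (simp add: card_image inj_on_def)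
qed

lemma out_dir_set:
  "{t. out_dir v t} =
     (if v \<in> C \<and> shiftv N v (0,1) \<notin> C then {(-1,0)} else {}) \<union>
     (if shiftv N v (0,1) \<in> C \<and> shiftv N v (1,1) \<notin> C then {(0,1)} else {}) \<union>
     (if shiftv N v (1,0) \<in> C \<and> v \<notin> C then {(0,-1)} else {}) \<union>
     (if shiftv N v (1,1) \<in> C \<and> shiftv N v (1,0) \<notin> C then {(1,0)} else {})"
  unfolding out_dir_def by auto

text \<open>The two facts behind the North-West/South-East rule, checked on the 16 possible
  configurations of the four corners: if a dual vertex is not passed straight through, the
  outgoing edge obtained by swapping the coordinates of an incoming direction exists; if it
  is, the incoming edge is unique.\<close>

lemma out_dir_swap_if_not_unique:
  assumes "in_dir v t" "card {t. out_dir v t} \<noteq> 1"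
  shows "out_dir v (snd t, fst t)"
  using assms unfolding out_dir_set
  by (cases "v \<in> C"; cases "shiftv N v (1,0) \<in> C"; cases "shiftv N v (0,1) \<in> C";
      cases "shiftv N v (1,1) \<in> C"; auto simp: in_dir_def out_dir_def)

lemma in_dir_unique_if_out_unique:
  assumes "in_dir v t" "in_dir v t'" "card {t. out_dir v t} = 1"
  shows "t = t'"
  using assms unfolding out_dir_set
  by (cases "v \<in> C"; cases "shiftv N v (1,0) \<in> C"; cases "shiftv N v (0,1) \<in> C";
      cases "shiftv N v (1,1) \<in> C"; auto simp: in_dir_def)

lemma dsucc_eq:
  "dsucc N B e =
    (if card {e'\<in>B. fst e' = dend N e} = 1 then the_elem {e'\<in>B. fst e' = dend N e}
     else (dend N e, (snd (snd e), fst (snd e))))"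
  unfolding dsucc_def Let_def ..

lemma dsucc_in_bdry:
  assumes e: "e \<in> B"
  shows "dsucc N B e \<in> B \<and> fst (dsucc N B e) = dend N e"
proof -
  define v where "v = dend N e"
  have v: "v \<in> torus N"
    using dend_in_torus v_def by simp
  show ?thesis
  proof (cases "card {e'\<in>B. fst e' = v} = 1")
    case True
    then obtain a where a: "{e'\<in>B. fst e' = v} = {a}"
      using card_1_singletonE by blast
    then have "dsucc N B e = a"
      using dsucc_eq[of e] True unfolding v_def[symmetric] by simp
    then show ?thesis
      using a unfolding v_def by auto
  next
    case False
    then have "out_dir v (snd (snd e), fst (snd e))"
      using out_dir_swap_if_not_unique in_dir_if_ending_bdry[OF v e v_def[symmetric]]
        card_starting_bdry[OF v] by simp
    then have "(v, (snd (snd e), fst (snd e))) \<in> B"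
      using starting_bdry_iff[OF v, of "(v, (snd (snd e), fst (snd e)))"] by simp
    moreover have "dsucc N B e = (v, (snd (snd e), fst (snd e)))"
      using dsucc_eq[of e] False unfolding v_def[symmetric] by simp
    ultimately show ?thesis
      unfolding v_def by simp
  qed
qed

lemma dsucc_image_subset: "dsucc N B ` B \<subseteq> B"
  using dsucc_in_bdry by auto

lemma inj_on_dsucc: "inj_on (dsucc N B) B"
proof
  fix e e'
  assume e: "e \<in> B" and e': "e' \<in> B" and eq: "dsucc N B e = dsucc N B e'"
  define v where "v = dend N e"
  have v: "v \<in> torus N"
    using dend_in_torus v_def by simp
  have dend: "dend N e' = v"
    using dsucc_in_bdry[OF e] dsucc_in_bdry[OF e'] eq v_def by simp
  have "snd e = snd e'"
  proof (cases "card {e'\<in>B. fst e' = v} = 1")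
    case True
    then show ?thesis
      using in_dir_unique_if_out_unique in_dir_if_ending_bdry[OF v e v_def[symmetric]]
        in_dir_if_ending_bdry[OF v e' dend] card_starting_bdry[OF v] by simp
  next
    case False
    then have "dsucc N B e = (v, (snd (snd e), fst (snd e)))"
      "dsucc N B e' = (v, (snd (snd e'), fst (snd e')))"
      using dsucc_eq[of e] dsucc_eq[of e'] dend unfolding v_def[symmetric] by simp_all
    then show ?thesis
      using eq by (simp add: prod_eq_iff)
  qed
  then show "e = e'"
    using fst_dend_bdry[OF e] fst_dend_bdry[OF e'] dend v_def by (simp add: prod_eq_iff)
qed

end

section \<open>Boundary cycles and their potential\<close>

lemma card_filter_four:
  assumes "distinct [a,b,c,d]"
  shows "card {e\<in>G. e \<in> {a,b,c,d}} = of_bool (a \<in> G) + of_bool (b \<in> G) + of_bool (c \<in> G) + of_bool (d \<in> G)"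
proof -
  have "card {e\<in>G. e \<in> {a,b,c,d}} = (\<Sum>e\<in>{e\<in>{a,b,c,d}. e \<in> G}. 1)"
    by (simp add: conj_commute)
  also have "\<dots> = (\<Sum>e\<in>{a,b,c,d}. if e \<in> G then 1 else 0)"
    by (rule sum.inter_filter) simp
  also have "\<dots> = of_bool (a \<in> G) + of_bool (b \<in> G) + of_bool (c \<in> G) + of_bool (d \<in> G)"
    using assms by (simp add: add.assoc)
  finally show ?thesis .
qed

locale boundary_cycle = level_component +
  fixes G :: "dedge set"
  assumes cycle_subset_bdry: "G \<subseteq> B"
    and dsucc_cycle: "dsucc N B ` G \<subseteq> G"
begin

definition crossing :: "vert \<Rightarrow> int \<times> int \<Rightarrow> int" where
  "crossing l d = (if dualedge N l d \<in> G then 1 else 0)"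

text \<open>The signed number of edges of G crossing the edge from l to l + d, counted positively
  when l lies to their left.\<close>

definition flux :: "vert \<Rightarrow> int \<times> int \<Rightarrow> int" where
  "flux l d = crossing l d - crossing (shiftv N l d) (- fst d, - snd d)"

lemma finite_cycle: "finite G"
  using finite_bdry cycle_subset_bdry finite_subset by blast

lemma card_ending_eq_card_starting_cycle: "card {e\<in>G. dend N e = v} = card {e\<in>G. fst e = v}"
  using dsucc_in_bdry cycle_subset_bdry
  by (intro card_ending_eq_card_starting[OF finite_cycle inj_on_subset[OF inj_on_dsucc cycle_subset_bdry] dsucc_cycle])
    blast

lemma starting_cycle_eq:
  assumes v: "v \<in> torus N"
  shows "{e\<in>G. fst e = v} = {e\<in>G. e \<in> {dualedge N v (0,1), dualedge N (shiftv N v (0,1)) (1,0),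
      dualedge N (shiftv N v (1,0)) (-1,0), dualedge N (shiftv N v (1,1)) (0,-1)}}"
proof -
  have "dualedge N v (0,1) = (v, (-1,0))" "dualedge N (shiftv N v (0,1)) (1,0) = (v, (0,1))"
    "dualedge N (shiftv N v (1,0)) (-1,0) = (v, (0,-1))" "dualedge N (shiftv N v (1,1)) (0,-1) = (v, (1,0))"
    using shiftv_zero[OF v] by (simp_all add: dualedge_simps)
  moreover have "e \<in> {(v, (-1,0)), (v,(0,1)), (v,(0,-1)), (v,(1,0))}" if "e \<in> G" "fst e = v" for e
  proof -
    have "out_dir v (snd e)"
      using starting_bdry_iff[OF v, of e] cycle_subset_bdry that by auto
    then show ?thesis
      using \<open>fst e = v\<close> unfolding out_dir_def by (cases e) auto
  qed
  ultimately show ?thesis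
    by auto
qed

lemma ending_cycle_eq:
  assumes v: "v \<in> torus N"
  shows "{e\<in>G. dend N e = v} = {e\<in>G. e \<in> {dualedge N v (1,0), dualedge N (shiftv N v (1,0)) (0,1),
      dualedge N (shiftv N v (1,1)) (-1,0), dualedge N (shiftv N v (0,1)) (0,-1)}}"
proof -
  have "e \<in> {dualedge N v (1,0), dualedge N (shiftv N v (1,0)) (0,1),
      dualedge N (shiftv N v (1,1)) (-1,0), dualedge N (shiftv N v (0,1)) (0,-1)}"
    if e: "e \<in> G" "dend N e = v" for e
  proof -
    obtain l d where l: "l \<in> C" "d \<in> units" "e = dualedge N l d"
      using bdry_elem cycle_subset_bdry e(1) by blast
    have "l \<in> torus N"
      using l comp_subset_torus by auto
    then have "(d = (1,0) \<and> l = v) \<or> (d = (0,1) \<and> l = shiftv N v (1,0)) \<or>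
        (d = (-1,0) \<and> l = shiftv N v (1,1)) \<or> (d = (0,-1) \<and> l = shiftv N v (0,1))"
      using dend_dualedge_eq_iff[OF _ l(2) v] e l(3) by simp
    then show ?thesis
      using l(3) by auto
  qed
  moreover have "dend N e = v" if "e \<in> {dualedge N v (1,0), dualedge N (shiftv N v (1,0)) (0,1),
      dualedge N (shiftv N v (1,1)) (-1,0), dualedge N (shiftv N v (0,1)) (0,-1)}" for e
    using that shiftv_zero[OF v] by (auto simp: dend_def dualedge_simps)
  ultimately show ?thesis
    by (simp only: set_eq_iff mem_Collect_eq) blast
qed

lemma crossing_balance:
  assumes v: "v \<in> torus N"
  shows "crossing v (1,0) + crossing (shiftv N v (1,0)) (0,1) + crossing (shiftv N v (1,1)) (-1,0)
           + crossing (shiftv N v (0,1)) (0,-1)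
       = crossing v (0,1) + crossing (shiftv N v (0,1)) (1,0) + crossing (shiftv N v (1,0)) (-1,0)
           + crossing (shiftv N v (1,1)) (0,-1)"
proof -
  have ending: "distinct [dualedge N v (1,0), dualedge N (shiftv N v (1,0)) (0,1),
      dualedge N (shiftv N v (1,1)) (-1,0), dualedge N (shiftv N v (0,1)) (0,-1)]"
    and starting: "distinct [dualedge N v (0,1), dualedge N (shiftv N v (0,1)) (1,0),
      dualedge N (shiftv N v (1,0)) (-1,0), dualedge N (shiftv N v (1,1)) (0,-1)]"
    by (simp_all add: dualedge_simps)
  have "int (card {e\<in>G. dend N e = v}) = int (card {e\<in>G. fst e = v})"
    using card_ending_eq_card_starting_cycle by simp
  then show ?thesis
    unfolding ending_cycle_eq[OF v] starting_cycle_eq[OF v] card_filter_four[OF ending]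
      card_filter_four[OF starting] crossing_def
    by (simp only: of_nat_add of_nat_of_bool) (simp add: of_bool_def)
qed

lemma flux_closed:
  assumes v: "v \<in> torus N"
  shows "flux v (1,0) + flux (shiftv N v (1,0)) (0,1) = flux v (0,1) + flux (shiftv N v (0,1)) (1,0)"
  using crossing_balance[OF v] shiftv_zero[OF v] unfolding flux_def by simp

definition cycle_pairs :: "(vert \<times> (int \<times> int)) set" where
  "cycle_pairs = {p \<in> torus N \<times> units. case_prod (dualedge N) p \<in> G}"

lemma cycle_eq_image: "G = (\<lambda>(l,d). dualedge N l d) ` cycle_pairs"
  using bdry_subset_dualedge_image cycle_subset_bdry unfolding cycle_pairs_def by blast

lemma inj_on_cycle_pairs: "inj_on (\<lambda>(l,d). dualedge N l d) cycle_pairs"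
  by (rule inj_on_subset[OF inj_on_dualedge]) (auto simp: cycle_pairs_def)

lemma sum_cycle:
  "(\<Sum>e\<in>G. f e) = (\<Sum>l\<in>torus N. \<Sum>d\<in>units. if dualedge N l d \<in> G then f (dualedge N l d) else 0)"
proof -
  have "(\<Sum>e\<in>G. f e) = (\<Sum>p\<in>cycle_pairs. f ((\<lambda>(l,d). dualedge N l d) p))"
    by (subst cycle_eq_image) (simp add: sum.reindex[OF inj_on_cycle_pairs])
  also have "\<dots> = (\<Sum>p\<in>torus N \<times> units. if dualedge N (fst p) (snd p) \<in> G then f (dualedge N (fst p) (snd p)) else 0)"
    unfolding cycle_pairs_def split_beta by (rule sum.inter_filter) (simp add: finite_torus finite_units)
  also have "\<dots> = (\<Sum>l\<in>torus N. \<Sum>d\<in>units. if dualedge N l d \<in> G then f (dualedge N l d) else 0)"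
    by (simp only: sum.cartesian_product split_beta')
  finally show ?thesis .
qed

lemma sum_cycle_snd_direction: "(\<Sum>e\<in>G. snd (snd e)) = (\<Sum>l\<in>torus N. flux l (1,0))"
proof -
  have "(\<Sum>e\<in>G. snd (snd e)) = (\<Sum>l\<in>torus N. crossing l (1,0) - crossing l (-1,0))"
    unfolding sum_cycle sum_units snd_dualedge
    by (simp add: crossing_def cong: if_cong, intro sum.cong refl, simp)
  also have "\<dots> = (\<Sum>l\<in>torus N. crossing l (1,0)) - (\<Sum>l\<in>torus N. crossing (shiftv N l (1,0)) (-1,0))"
    using sum_shiftv[OF N_pos, of "\<lambda>l. crossing l (-1,0)" "(1,0)"] by (simp add: sum_subtractf)
  also have "\<dots> = (\<Sum>l\<in>torus N. flux l (1,0))"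
    by (simp add: flux_def sum_subtractf)
  finally show ?thesis .
qed

lemma sum_cycle_fst_direction: "(\<Sum>e\<in>G. fst (snd e)) = - (\<Sum>l\<in>torus N. flux l (0,1))"
proof -
  have "(\<Sum>e\<in>G. fst (snd e)) = (\<Sum>l\<in>torus N. crossing l (0,-1) - crossing l (0,1))"
    unfolding sum_cycle sum_units snd_dualedge
    by (simp add: crossing_def cong: if_cong, intro sum.cong refl, simp)
  also have "\<dots> = (\<Sum>l\<in>torus N. crossing (shiftv N l (0,1)) (0,-1)) - (\<Sum>l\<in>torus N. crossing l (0,1))"
    using sum_shiftv[OF N_pos, of "\<lambda>l. crossing l (0,-1)" "(0,1)"] by (simp add: sum_subtractf)
  also have "\<dots> = - (\<Sum>l\<in>torus N. flux l (0,1))"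
    by (simp add: flux_def sum_subtractf)
  finally show ?thesis .
qed

definition row_flux :: "nat \<Rightarrow> int" where
  "row_flux b = (\<Sum>a<N. flux (a,b) (1,0))"

definition column_flux :: "nat \<Rightarrow> int" where
  "column_flux a = (\<Sum>b<N. flux (a,b) (0,1))"

lemma flux_closed_nat:
  assumes "a < N" "b < N"
  shows "flux (a,b) (1,0) + flux (Suc a mod N, b) (0,1) = flux (a,b) (0,1) + flux (a, Suc b mod N) (1,0)"
  using flux_closed[of "(a,b)"] shiftv_east[of N a b] shiftv_north[of N a b] assms by (simp add: torus_def)

lemma row_flux_const: "b < N \<Longrightarrow> row_flux b = row_flux 0"
proof (induction b)
  case (Suc b)
  have "(\<Sum>a<N. flux (a,b) (1,0) + flux (Suc a mod N, b) (0,1)) =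
      (\<Sum>a<N. flux (a,b) (0,1) + flux (a, Suc b mod N) (1,0))"
    by (rule sum.cong) (use flux_closed_nat Suc.prems in auto)
  then have "row_flux (Suc b) = row_flux b"
    using sum_Suc_mod[of "\<lambda>a. flux (a,b) (0,1)"] Suc.prems by (simp add: sum.distrib row_flux_def)
  then show ?case
    using Suc by simp
qed simp

lemma column_flux_const: "a < N \<Longrightarrow> column_flux a = column_flux 0"
proof (induction a)
  case (Suc a)
  have "(\<Sum>b<N. flux (a,b) (1,0) + flux (Suc a mod N, b) (0,1)) =
      (\<Sum>b<N. flux (a,b) (0,1) + flux (a, Suc b mod N) (1,0))"
  proof (rule sum.cong)
    fix b
    assume "b \<in> {..<N}"
    then show "flux (a,b) (1,0) + flux (Suc a mod N, b) (0,1) = flux (a,b) (0,1) + flux (a, Suc b mod N) (1,0)"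
      using flux_closed_nat[of a b] Suc.prems by simp
  qed simp
  then have "column_flux (Suc a) = column_flux a"
    using sum_Suc_mod[of "\<lambda>b. flux (a,b) (1,0)"] Suc.prems by (simp add: sum.distrib column_flux_def)
  then show ?case
    using Suc by simp
qed simp

text \<open>By closedness all rows carry the same flux, and the fluxes of all rows add up to the
  total vertical direction of G; likewise for columns.\<close>

lemma periods_vanish:
  assumes "(\<Sum>e\<in>G. snd e) = (0,0)"
  shows "row_flux 0 = 0" "column_flux 0 = 0"
proof -
  have "(\<Sum>e\<in>G. snd (snd e)) = 0"
    using arg_cong[OF assms, of snd] by (simp add: snd_sum)
  then have "(\<Sum>b<N. row_flux b) = 0"
    unfolding sum_cycle_snd_direction sum_torus_swap row_flux_def .
  moreover have "(\<Sum>b<N. row_flux b) = (\<Sum>b<N. row_flux 0)"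
    by (intro sum.cong refl row_flux_const) simp
  ultimately show "row_flux 0 = 0"
    using N_pos by simp
  have "(\<Sum>e\<in>G. fst (snd e)) = 0"
    using arg_cong[OF assms, of fst] by (simp add: fst_sum)
  then have "(\<Sum>b<N. \<Sum>a<N. flux (a,b) (0,1)) = 0"
    unfolding sum_cycle_fst_direction sum_torus_swap by simp
  then have "(\<Sum>a<N. column_flux a) = 0"
    unfolding column_flux_def by (subst sum.swap)
  moreover have "(\<Sum>a<N. column_flux a) = (\<Sum>a<N. column_flux 0)"
    by (intro sum.cong refl column_flux_const) simp
  ultimately show "column_flux 0 = 0"
    using N_pos by simp
qed

definition potential :: "vert \<Rightarrow> int" where
  "potential l = (\<Sum>s<fst l. flux (s,0) (1,0)) + (\<Sum>t<snd l. flux (fst l, t) (0,1))"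

lemma column_sum_diff:
  assumes "a < N" "b < N"
  shows "(\<Sum>t<b. flux (Suc a mod N, t) (0,1)) - (\<Sum>t<b. flux (a,t) (0,1)) = flux (a,b) (1,0) - flux (a,0) (1,0)"
  using assms(2)
proof (induction b)
  case (Suc b)
  then have "flux (a,b) (1,0) + flux (Suc a mod N, b) (0,1) = flux (a,b) (0,1) + flux (a, Suc b) (1,0)"
    using flux_closed_nat[OF assms(1)] by simp
  then show ?case
    using Suc by simp
qed simp

lemma potential_east:
  assumes l: "l \<in> torus N" and row: "row_flux 0 = 0"
  shows "potential (shiftv N l (1,0)) = potential l + flux l (1,0)"
proof -
  obtain a b where ab: "l = (a,b)" "a < N" "b < N"
    using l by (cases l) (auto simp: torus_def)
  have east: "shiftv N l (1,0) = (Suc a mod N, b)"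
    using shiftv_east[of N a b] ab by simp
  have column: "(\<Sum>t<b. flux (Suc a mod N, t) (0,1)) = (\<Sum>t<b. flux (a,t) (0,1)) + flux (a,b) (1,0) - flux (a,0) (1,0)"
    using column_sum_diff[OF ab(2,3)] by simp
  show ?thesis
  proof (cases "Suc a < N")
    case True
    then show ?thesis
      unfolding potential_def east using column ab(1) by simp
  next
    case False
    then have "Suc a = N"
      using ab(2) by simp
    then have "(\<Sum>s<a. flux (s,0) (1,0)) + flux (a,0) (1,0) = 0"
      using row unfolding row_flux_def by (metis sum.lessThan_Suc)
    then show ?thesis
      unfolding potential_def east using column \<open>Suc a = N\<close> ab(1) by simp
  qed
qed

lemma potential_north:
  assumes l: "l \<in> torus N" and column: "column_flux 0 = 0"
  shows "potential (shiftv N l (0,1)) = potential l + flux l (0,1)"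
proof -
  obtain a b where ab: "l = (a,b)" "a < N" "b < N"
    using l by (cases l) (auto simp: torus_def)
  have north: "shiftv N l (0,1) = (a, Suc b mod N)"
    using shiftv_north[of N a b] ab by simp
  show ?thesis
  proof (cases "Suc b < N")
    case True
    then show ?thesis
      unfolding potential_def north using ab(1) by simp
  next
    case False
    then have "Suc b = N"
      using ab(3) by simp
    then have "(\<Sum>t<b. flux (a,t) (0,1)) + flux (a,b) (0,1) = 0"
      using column column_flux_const[OF ab(2)] unfolding column_flux_def by (metis sum.lessThan_Suc)
    then show ?thesis
      unfolding potential_def north using \<open>Suc b = N\<close> ab(1) by simp
  qed
qed

lemma potential_step:
  assumes l: "l \<in> torus N" and d: "d \<in> units"
    and periods: "row_flux 0 = 0" "column_flux 0 = 0"
  shows "potential (shiftv N l d) = potential l + flux l d"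
proof -
  have west: "shiftv N (shiftv N l (-1,0)) (1,0) = l" and south: "shiftv N (shiftv N l (0,-1)) (0,1) = l"
    using shiftv_zero[OF l] by simp_all
  from d consider "d = (1,0)" | "d = (-1,0)" | "d = (0,1)" | "d = (0,-1)"
    by (auto simp: mem_units_iff)
  then show ?thesis
  proof cases
    case 1
    then show ?thesis
      using potential_east[OF l periods(1)] by simp
  next
    case 2
    have "potential l = potential (shiftv N l (-1,0)) + flux (shiftv N l (-1,0)) (1,0)"
      using potential_east[OF _ periods(1), of "shiftv N l (-1,0)"] west by simp
    moreover have "flux (shiftv N l (-1,0)) (1,0) = - flux l (-1,0)"
      unfolding flux_def using west by simp
    ultimately show ?thesis
      using 2 by simp
  next
    case 3
    then show ?thesis
      using potential_north[OF l periods(2)] by simp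
  next
    case 4
    have "potential l = potential (shiftv N l (0,-1)) + flux (shiftv N l (0,-1)) (0,1)"
      using potential_north[OF _ periods(2), of "shiftv N l (0,-1)"] south by simp
    moreover have "flux (shiftv N l (0,-1)) (0,1) = - flux l (0,-1)"
      unfolding flux_def using south by simp
    ultimately show ?thesis
      using 4 by simp
  qed
qed

end

section \<open>Contours and the contour gamma\<close>

context level_component
begin

lemma bdry_is_cycle: "boundary_cycle N x i B"
  by unfold_locales (use dsucc_in_bdry in auto)

lemma sum_bdry_directions: "(\<Sum>e\<in>B. snd e) = (0,0)"
proof -
  interpret bdry: boundary_cycle N x i B
    by (rule bdry_is_cycle)
  have flux: "bdry.flux l d = of_bool (l \<in> C) - of_bool (shiftv N l d \<in> C)"
    if l: "l \<in> torus N" and d: "d \<in> units" for l d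
  proof -
    have "dualedge N (shiftv N l d) (- fst d, - snd d) \<in> B \<longleftrightarrow> shiftv N l d \<in> C \<and> l \<notin> C"
      using dualedge_in_bdry_iff[OF _ negv_in_units[OF d], of "shiftv N l d"] shiftv_negv[OF l]
      by (simp add: negv_def)
    then show ?thesis
      unfolding bdry.flux_def bdry.crossing_def using dualedge_in_bdry_iff[OF l d] by auto
  qed
  have "(\<Sum>e\<in>B. snd (snd e)) = (\<Sum>l\<in>torus N. of_bool (l \<in> C) - of_bool (shiftv N l (1,0) \<in> C))"
    unfolding bdry.sum_cycle_snd_direction by (rule sum.cong) (simp_all add: flux mem_units_iff)
  also have "\<dots> = 0"
    using sum_shiftv[OF N_pos, of "\<lambda>l. of_bool (l \<in> C) :: int" "(1,0)"] by (simp add: sum_subtractf)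
  finally have "(\<Sum>e\<in>B. snd (snd e)) = 0" .
  moreover have "(\<Sum>e\<in>B. fst (snd e)) = - (\<Sum>l\<in>torus N. of_bool (l \<in> C) - of_bool (shiftv N l (0,1) \<in> C))"
    unfolding bdry.sum_cycle_fst_direction by (simp add: flux mem_units_iff)
  moreover have "\<dots> = 0"
    using sum_shiftv[OF N_pos, of "\<lambda>l. of_bool (l \<in> C) :: int" "(0,1)"] by (simp add: sum_subtractf)
  ultimately show ?thesis
    by (simp add: prod_eq_iff fst_sum snd_sum)
qed

lemma contours_eq: "contours N B = forward_orbit (dsucc N B) ` B"
proof -
  have "forward_orbit (dsucc N B) = (\<lambda>e. {(dsucc N B ^^ n) e | n. True})"
    by (simp add: fun_eq_iff forward_orbit_def full_SetCompr_eq)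
  then show ?thesis
    by (simp only: contours_def setcompr_eq_image Collect_mem_eq)
qed

lemma contour_subset_bdry:
  assumes "c \<in> contours N B"
  shows "c \<subseteq> B"
proof -
  obtain e where "c = forward_orbit (dsucc N B) e" "e \<in> B"
    using assms unfolding contours_eq by (rule imageE)
  then show ?thesis
    using forward_orbit_subset[OF dsucc_image_subset] by simp
qed

lemma dsucc_contour_subset:
  assumes "c \<in> contours N B"
  shows "dsucc N B ` c \<subseteq> c"
proof -
  obtain e where "c = forward_orbit (dsucc N B) e"
    using assms unfolding contours_eq by (rule imageE)
  then show ?thesis
    using forward_orbit_closed by simp
qed

lemma finite_contours: "finite (contours N B)"
  using finite_bdry by (simp add: contours_eq)

lemma contours_disjoint:
  assumes "c \<in> contours N B" "c' \<in> contours N B" "c \<noteq> c'"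
  shows "c \<inter> c' = {}"
proof -
  obtain e e' where "c = forward_orbit (dsucc N B) e" "e \<in> B" "c' = forward_orbit (dsucc N B) e'" "e' \<in> B"
    using assms(1,2) unfolding contours_eq by (elim imageE)
  then show ?thesis
    using forward_orbits_disjoint[OF finite_bdry dsucc_image_subset inj_on_dsucc] assms(3) by simp
qed

lemma Union_contours: "\<Union>(contours N B) = B"
proof
  show "\<Union>(contours N B) \<subseteq> B"
    using contour_subset_bdry by (rule Union_least)
  show "B \<subseteq> \<Union>(contours N B)"
  proof
    fix e
    assume "e \<in> B"
    then have "forward_orbit (dsucc N B) e \<in> contours N B"
      unfolding contours_eq by (rule imageI)
    then show "e \<in> \<Union>(contours N B)"
      using self_in_forward_orbit by (rule UnionI)
  qed
qed

lemma sum_Union_contours: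
  assumes "W \<subseteq> contours N B"
  shows "(\<Sum>e\<in>\<Union>W. f e) = (\<Sum>c\<in>W. \<Sum>e\<in>c. f e)"
proof -
  have "\<forall>c\<in>W. finite c"
    using contour_subset_bdry finite_bdry finite_subset assms by blast
  moreover have "\<forall>c\<in>W. \<forall>c'\<in>W. c \<noteq> c' \<longrightarrow> c \<inter> c' = {}"
    using contours_disjoint assms by blast
  ultimately show ?thesis
    using sum.Union_disjoint[of W f] by (simp add: o_def)
qed

lemma gamma_cases:
  obtains (contour) "gamma N i j x \<in> contours N B" "\<not> winding (gamma N i j x)"
  | (winding) "gamma N i j x = \<Union>{c \<in> contours N B. winding c}"
proof (cases "\<exists>!c. c \<in> contours N B \<and> \<not> winding c \<and> separates N c i j")
  case True
  then have "gamma N i j x = (THE c. c \<in> contours N B \<and> \<not> winding c \<and> separates N c i j)"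
    unfolding gamma_def by (simp add: Let_def)
  then show ?thesis
    using theI'[OF True] contour by simp
next
  case False
  then show ?thesis
    using winding unfolding gamma_def by (simp add: Let_def)
qed

lemma gamma_is_cycle: "boundary_cycle N x i (gamma N i j x)"
proof
  show "gamma N i j x \<subseteq> B"
    by (cases rule: gamma_cases[of j]) (auto dest: contour_subset_bdry)
  show "dsucc N B ` gamma N i j x \<subseteq> gamma N i j x"
    by (cases rule: gamma_cases[of j]) (use dsucc_contour_subset in fastforce)+
qed

text \<open>In the winding case this uses that all of the boundary, and each of its non-winding
  contours, has total direction zero.\<close>

lemma sum_gamma_directions: "(\<Sum>e\<in>gamma N i j x. snd e) = (0,0)"
proof (cases rule: gamma_cases[of j])
  case contour
  then show ?thesis
    by (simp add: winding_def)
next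
  case winding
  define W where "W = {c \<in> contours N B. winding c}"
  have "(\<Sum>e\<in>B. snd e) = (\<Sum>c\<in>contours N B. \<Sum>e\<in>c. snd e)"
    using sum_Union_contours[of "contours N B" snd] Union_contours by simp
  also have "\<dots> = (\<Sum>c\<in>W. \<Sum>e\<in>c. snd e) + (\<Sum>c\<in>contours N B - W. \<Sum>e\<in>c. snd e)"
    using sum.subset_diff[of W "contours N B" "\<lambda>c. \<Sum>e\<in>c. snd e"] finite_contours
    by (simp add: W_def add.commute)
  also have "(\<Sum>c\<in>contours N B - W. \<Sum>e\<in>c. snd e) = 0"
    by (rule sum.neutral) (auto simp: W_def winding_def zero_prod_def)
  also have "(\<Sum>c\<in>W. \<Sum>e\<in>c. snd e) = (\<Sum>e\<in>\<Union>W. snd e)"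
    using sum_Union_contours[of W snd] by (simp add: W_def)
  finally show ?thesis
    using sum_bdry_directions winding by (simp add: W_def)
qed

end

section \<open>The energy estimate\<close>

lemma edges_elem:
  assumes "e \<in> edges N"
  obtains l d where "l \<in> torus N" "d \<in> units" "e = {l, shiftv N l d}"
  using assms unfolding edges_def nn_adj_def by blast

lemma finite_edges: "finite (edges N)"
proof -
  have "edges N \<subseteq> (\<lambda>(l,d). {l, shiftv N l d}) ` (torus N \<times> units)"
  proof
    fix e
    assume "e \<in> edges N"
    then obtain l d where "l \<in> torus N" "d \<in> units" "e = {l, shiftv N l d}"
      by (rule edges_elem)
    then show "e \<in> (\<lambda>(l,d). {l, shiftv N l d}) ` (torus N \<times> units)"
      by (intro rev_image_eqI[of "(l,d)"]) auto
  qed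
  then show ?thesis
    using finite_torus finite_units finite_subset by blast
qed

lemma edge_energy_pair: "(Max (y ` {l, m}) - Min (y ` {l, m}))^2 = ((y l - y m)::int)^2"
  by (cases "y l \<le> y m") (simp_all add: max_def min_def power2_commute)

lemma power2_decrease:
  fixes t :: int
  shows "1 \<le> t \<Longrightarrow> 1 \<le> t^2 - (t - 1)^2" and "t \<le> -1 \<Longrightarrow> 1 \<le> t^2 - (t + 1)^2"
  by (simp_all add: power2_eq_square algebra_simps)

locale gamma_config = level_component +
  fixes j :: vert
begin

abbreviation "g \<equiv> gamma N i j x"
abbreviation "L \<equiv> Lset N g i"

sublocale cyc: boundary_cycle N x i g
  by (rule gamma_is_cycle)

lemma potential_step:
  "l \<in> torus N \<Longrightarrow> d \<in> units \<Longrightarrow> cyc.potential (shiftv N l d) = cyc.potential l + cyc.flux l d"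
  using cyc.potential_step cyc.periods_vanish[OF sum_gamma_directions] by blast

lemma potential_avoid:
  assumes "avoid N g a b"
  shows "cyc.potential b = cyc.potential a"
proof -
  obtain d where d: "a \<in> torus N" "d \<in> units" "b = shiftv N a d"
      "dualedge N a d \<notin> g" "dualedge N b (negv d) \<notin> g"
    using assms unfolding avoid_def by blast
  then have "cyc.flux a d = 0"
    unfolding cyc.flux_def cyc.crossing_def by (simp add: negv_def)
  then show ?thesis
    using potential_step[OF d(1,2)] d(3) by simp
qed

lemma potential_on_L:
  assumes "k \<in> L"
  shows "cyc.potential k = cyc.potential i"
proof -
  have "(avoid N g)\<^sup>*\<^sup>* i k"
    using assms unfolding Lset_def by blast
  then show ?thesis
    by (induction rule: rtranclp_induct) (auto dest: potential_avoid)
qed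

lemma avoid_within_comp:
  assumes "a \<in> C" "d \<in> units" "shiftv N a d \<in> C"
  shows "avoid N g a (shiftv N a d)"
proof -
  have a: "a \<in> torus N"
    using assms comp_subset_torus by auto
  have "dualedge N a d \<notin> B"
    using dualedge_in_bdry_iff[OF a assms(2)] assms(3) by simp
  moreover have "dualedge N (shiftv N a d) (negv d) \<notin> B"
    using dualedge_in_bdry_iff[OF _ negv_in_units[OF assms(2)]] shiftv_negv[OF a] assms(1) by simp
  ultimately show ?thesis
    unfolding avoid_def using a assms(2) cyc.cycle_subset_bdry by blast
qed

lemma comp_subset_L: "C \<subseteq> L"
proof
  fix k
  assume "k \<in> C"
  then have "(\<lambda>a b. nn_adj N a b \<and> x a \<ge> x i \<and> x b \<ge> x i)\<^sup>*\<^sup>* i k"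
    by (auto simp: comp_def)
  then have "(avoid N g)\<^sup>*\<^sup>* i k \<and> k \<in> C"
  proof (induction rule: rtranclp_induct)
    case base
    then show ?case
      using self_in_comp by simp
  next
    case (step a b)
    then obtain d where d: "d \<in> units" "b = shiftv N a d"
      unfolding nn_adj_def by blast
    then have "b \<in> C"
      using comp_step[of a d] step by simp
    then have "avoid N g a b"
      using avoid_within_comp[of a d] step d by simp
    then show ?case
      using step \<open>b \<in> C\<close> by (meson rtranclp.rtrancl_into_rtrancl)
  qed
  then show "k \<in> L"
    using comp_subset_torus \<open>k \<in> C\<close> unfolding Lset_def by blast
qed

text \<open>The potential rises by one across every edge of gamma, whereas it is constant on L.\<close>

lemma gamma_edge_leaves_L:
  assumes "l \<in> torus N" "d \<in> units" "dualedge N l d \<in> g"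
  shows "l \<in> L \<and> shiftv N l d \<notin> L"
proof -
  have C: "l \<in> C" "shiftv N l d \<notin> C"
    using assms dualedge_in_bdry_iff[OF assms(1,2)] cyc.cycle_subset_bdry by auto
  have "(- fst d, - snd d) \<in> units"
    using negv_in_units[OF assms(2)] by (simp add: negv_def)
  then have "dualedge N (shiftv N l d) (- fst d, - snd d) \<notin> g"
    using dualedge_in_bdry_iff[of "shiftv N l d" "(- fst d, - snd d)"] C(2) cyc.cycle_subset_bdry by auto
  then have "cyc.flux l d = 1"
    unfolding cyc.flux_def cyc.crossing_def using assms(3) by simp
  then have "cyc.potential (shiftv N l d) = cyc.potential l + 1"
    using potential_step[OF assms(1,2)] by simp
  moreover have "cyc.potential l = cyc.potential i"
    using potential_on_L comp_subset_L C(1) by blast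
  ultimately show ?thesis
    using potential_on_L[of "shiftv N l d"] comp_subset_L C(1) by auto
qed

lemma leaving_L_leaves_comp:
  assumes "l \<in> torus N" "d \<in> units" "l \<in> L" "shiftv N l d \<notin> L"
  shows "l \<in> C \<and> shiftv N l d \<notin> C"
proof -
  have "\<not> avoid N g l (shiftv N l d)"
  proof
    assume "avoid N g l (shiftv N l d)"
    moreover have "(avoid N g)\<^sup>*\<^sup>* i l"
      using assms(3) unfolding Lset_def by blast
    ultimately have "(avoid N g)\<^sup>*\<^sup>* i (shiftv N l d)"
      by (rule rtranclp.rtrancl_into_rtrancl[rotated])
    then show False
      using assms(4) unfolding Lset_def by simp
  qed
  then have "dualedge N l d \<in> g \<or> dualedge N (shiftv N l d) (negv d) \<in> g"
    using assms(1,2) unfolding avoid_def by blast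
  moreover have "dualedge N (shiftv N l d) (negv d) \<notin> g"
    using gamma_edge_leaves_L[OF _ negv_in_units[OF assms(2)], of "shiftv N l d"] comp_subset_L assms(4)
    by auto
  ultimately show ?thesis
    using gamma_edge_leaves_L[OF assms(1,2)] dualedge_in_bdry_iff[OF assms(1,2)] cyc.cycle_subset_bdry
    by auto
qed

lemma F_apply: "l \<in> torus N \<Longrightarrow> F N i j x l = x l - of_bool (l \<in> L) - x (0,0) + of_bool ((0,0) \<in> L)"
  unfolding F_def by simp

lemma edge_energy_drop:
  assumes l: "l \<in> torus N" and d: "d \<in> units"
  shows "of_bool ((l \<in> L) \<noteq> (shiftv N l d \<in> L))
    \<le> (x l - x (shiftv N l d))^2 - (F N i j x l - F N i j x (shiftv N l d))^2"
proof -
  define m where "m = shiftv N l d"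
  have diff: "F N i j x l - F N i j x m = (x l - x m) - (of_bool (l \<in> L) - of_bool (m \<in> L))"
    using F_apply[OF l] F_apply[of m] by (simp add: m_def)
  consider "l \<in> L" "m \<notin> L" | "l \<notin> L" "m \<in> L" | "(l \<in> L) = (m \<in> L)"
    by blast
  then have "of_bool ((l \<in> L) \<noteq> (m \<in> L)) \<le> (x l - x m)^2 - (F N i j x l - F N i j x m)^2"
  proof cases
    case 1
    then have "x m < x l"
      using leaving_L_leaves_comp[OF l d] less_if_leaves_comp[OF _ d] m_def by blast
    then show ?thesis
      using diff 1 power2_decrease(1)[of "x l - x m"] by simp
  next
    case 2
    have "shiftv N m (negv d) = l"
      unfolding m_def by (rule shiftv_negv[OF l])
    then have "x l < x m"
      using leaving_L_leaves_comp[of m "negv d"] less_if_leaves_comp[of m "negv d"] 2 negv_in_units[OF d]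
      by (simp add: m_def)
    then show ?thesis
      using diff 2 power2_decrease(2)[of "x l - x m"] by simp
  next
    case 3
    then show ?thesis
      using diff by simp
  qed
  then show ?thesis
    unfolding m_def .
qed

definition L_boundary_edges :: "vert set set" where
  "L_boundary_edges = {{l, shiftv N l d} | l d. l \<in> L \<and> d \<in> units \<and> shiftv N l d \<notin> L}"

lemma L_boundary_edges_subset: "L_boundary_edges \<subseteq> edges N"
  unfolding L_boundary_edges_def edges_def nn_adj_def Lset_def by blast

lemma card_gamma_le_card_L_boundary_edges: "card g \<le> card L_boundary_edges"
proof -
  define segment :: "vert \<times> (int \<times> int) \<Rightarrow> vert set"
    where "segment = (\<lambda>p. {fst p, shiftv N (fst p) (snd p)})"
  have leaves: "fst p \<in> L \<and> shiftv N (fst p) (snd p) \<notin> L" if "p \<in> cyc.cycle_pairs" for p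
    using gamma_edge_leaves_L that unfolding cyc.cycle_pairs_def by (auto simp: split_beta)
  have "inj_on segment cyc.cycle_pairs"
  proof (rule inj_onI)
    fix p q
    assume p: "p \<in> cyc.cycle_pairs" and q: "q \<in> cyc.cycle_pairs" and eq: "segment p = segment q"
    have fst: "fst p = fst q"
      using leaves[OF p] leaves[OF q] eq unfolding segment_def by (auto simp: doubleton_eq_iff)
    then have "shiftv N (fst p) (snd p) = shiftv N (fst p) (snd q)"
      using leaves[OF p] leaves[OF q] eq unfolding segment_def by (auto simp: doubleton_eq_iff)
    then have "snd p = snd q"
      using shiftv_units_inj[OF N_ge_3] p q unfolding cyc.cycle_pairs_def by auto
    then show "p = q"
      using fst by (simp add: prod_eq_iff)
  qed
  moreover have "card g = card cyc.cycle_pairs"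
    by (subst cyc.cycle_eq_image) (rule card_image[OF cyc.inj_on_cycle_pairs])
  ultimately have "card g = card (segment ` cyc.cycle_pairs)"
    by (simp add: card_image)
  also have "\<dots> \<le> card L_boundary_edges"
  proof (rule card_mono)
    show "finite L_boundary_edges"
      using finite_edges L_boundary_edges_subset finite_subset by blast
    show "segment ` cyc.cycle_pairs \<subseteq> L_boundary_edges"
      using leaves unfolding segment_def cyc.cycle_pairs_def L_boundary_edges_def by fastforce
  qed
  finally show ?thesis .
qed

lemma energy_drop: "int (card g) \<le> H N x - H N (F N i j x)"
proof -
  let ?y = "F N i j x"
  define D where "D e = (Max (x ` e) - Min (x ` e))^2 - (Max (?y ` e) - Min (?y ` e))^2" for e
  have drop: "of_bool ((l \<in> L) \<noteq> (shiftv N l d \<in> L)) \<le> D {l, shiftv N l d}"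
    if "l \<in> torus N" "d \<in> units" for l d
    using edge_energy_drop[OF that] unfolding D_def edge_energy_pair .
  have "int (card g) \<le> int (card L_boundary_edges)"
    using card_gamma_le_card_L_boundary_edges by simp
  also have "\<dots> = (\<Sum>e\<in>L_boundary_edges. 1)"
    by simp
  also have "\<dots> \<le> (\<Sum>e\<in>L_boundary_edges. D e)"
  proof (rule sum_mono)
    fix e
    assume "e \<in> L_boundary_edges"
    then obtain l d where "l \<in> L" "d \<in> units" "shiftv N l d \<notin> L" "e = {l, shiftv N l d}"
      unfolding L_boundary_edges_def by blast
    then show "1 \<le> D e"
      using drop[of l d] by (simp add: Lset_def)
  qed
  also have "\<dots> \<le> (\<Sum>e\<in>edges N. D e)"
  proof (rule sum_mono2[OF finite_edges L_boundary_edges_subset])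
    fix e
    assume "e \<in> edges N - L_boundary_edges"
    then obtain l d where "l \<in> torus N" "d \<in> units" "e = {l, shiftv N l d}"
      by (blast elim: edges_elem)
    then show "0 \<le> D e"
      using drop[of l d] by (smt (verit) of_bool_eq(1) of_bool_eq(2))
  qed
  also have "\<dots> = H N x - H N ?y"
    unfolding H_def D_def by (simp add: sum_subtractf)
  finally show ?thesis .
qed

end

section \<open>Probability estimates\<close>

lemma gw_nonneg: "0 \<le> gw N \<beta> x"
  unfolding gw_def by simp

lemma Zpart_nonneg: "0 \<le> Zpart N \<beta>"
  unfolding Zpart_def by (rule infsum_nonneg) (rule gw_nonneg)

text \<open>If the weights are not summable, every probability is the junk value 0.\<close>

lemma Prob_not_summable: "\<not> gw N \<beta> summable_on Omega N \<Longrightarrow> Prob N \<beta> S = 0"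
  unfolding Prob_def Zpart_def by (simp add: infsum_not_exists)

lemma Prob_le_1: "Prob N \<beta> S \<le> 1"
proof (cases "gw N \<beta> summable_on Omega N")
  case True
  have "infsum (gw N \<beta>) (Omega N \<inter> S) \<le> Zpart N \<beta>"
    unfolding Zpart_def
    by (rule infsum_mono2[OF summable_on_subset_banach[OF True] True]) (auto simp: gw_nonneg)
  then show ?thesis
    unfolding Prob_def using Zpart_nonneg[of N \<beta>]
    by (cases "Zpart N \<beta> = 0") (auto simp: divide_le_eq_1)
next
  case False
  then show ?thesis
    using Prob_not_summable by simp
qed

lemma infsum_le_cmult_infsum_injective_image:
  fixes w :: "'a \<Rightarrow> real"
  assumes inj: "inj_on h A" and image: "h ` A \<subseteq> A'" and "w summable_on A'"
    and le: "\<And>x. x \<in> A \<Longrightarrow> w x \<le> c * w (h x)" and "\<And>x. 0 \<le> w x" and "0 \<le> c"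
  shows "infsum w A \<le> c * infsum w A'"
proof -
  have "w summable_on h ` A"
    using \<open>w summable_on A'\<close> image by (rule summable_on_subset_banach)
  then have "(\<lambda>x. w (h x)) summable_on A"
    using summable_on_reindex[OF inj, of w] by (simp add: o_def)
  moreover from this have "w summable_on A"
    by (rule summable_on_comparison_test[OF summable_on_cmult_right]) (use le assms(5) in auto)
  ultimately have "infsum w A \<le> infsum (\<lambda>x. c * w (h x)) A"
    by (intro infsum_mono summable_on_cmult_right le)
  also have "\<dots> = c * infsum w (h ` A)"
    using infsum_reindex[OF inj, of w] by (simp add: infsum_cmult_right' o_def)
  also have "\<dots> \<le> c * infsum w A'"
    using \<open>w summable_on h ` A\<close> \<open>w summable_on A'\<close> image assms(5,6)
    by (intro mult_left_mono infsum_mono2) auto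
  finally show ?thesis .
qed

lemma F_diff_ge:
  assumes "i \<in> torus N" "j \<in> torus N"
  shows "x i - x j - 1 \<le> F N i j x i - F N i j x j"
  using assms unfolding F_def by (auto simp: of_bool_def)

lemma inj_on_F: "inj_on (F N i j) {x \<in> Omega N. gamma N i j x = g}"
proof (rule inj_onI)
  fix x y
  assume x: "x \<in> {x \<in> Omega N. gamma N i j x = g}" and y: "y \<in> {x \<in> Omega N. gamma N i j x = g}"
    and eq: "F N i j x = F N i j y"
  show "x = y"
  proof
    fix l
    show "x l = y l"
    proof (cases "l \<in> torus N")
      case True
      have "F N i j x l = F N i j y l"
        using eq by simp
      then show ?thesis
        using x y True unfolding F_def Omega_def by auto
    next
      case False
      then show ?thesis
        using x y unfolding Omega_def by (cases l) auto
    qed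
  qed
qed

context discrete_torus
begin

lemma F_in_Omega: "x \<in> Omega N \<Longrightarrow> F N i j x \<in> Omega N"
  using N_pos unfolding Omega_def F_def by (auto simp: torus_def)

lemma gw_le_gw_F:
  assumes "i \<in> torus N" "0 \<le> \<beta>"
  shows "gw N \<beta> x \<le> exp (- \<beta> * real (card (gamma N i j x))) * gw N \<beta> (F N i j x)"
proof -
  interpret gamma_config N x i j
    by unfold_locales (rule assms(1))
  have "real (card (gamma N i j x)) + real_of_int (H N (F N i j x)) \<le> real_of_int (H N x)"
    using energy_drop by linarith
  then have "\<beta> * (real (card (gamma N i j x)) + real_of_int (H N (F N i j x))) \<le> \<beta> * real_of_int (H N x)"
    using assms(2) by (rule mult_left_mono)
  then have "- \<beta> * real_of_int (H N x) \<le> - \<beta> * real (card (gamma N i j x)) + - \<beta> * real_of_int (H N (F N i j x))"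
    by (simp add: algebra_simps)
  then show ?thesis
    unfolding gw_def by (simp add: exp_add[symmetric])
qed

lemma Prob_gamma_le:
  assumes ij: "i \<in> torus N" "j \<in> torus N" and "0 \<le> \<beta>"
  shows "Prob N \<beta> {x. x i - x j \<ge> int k \<and> gamma N i j x = g}
           \<le> exp (- \<beta> * real (card g)) * Prob N \<beta> {x. x i - x j \<ge> int k - 1}"
proof (cases "gw N \<beta> summable_on Omega N")
  case False
  then show ?thesis
    using Prob_not_summable by simp
next
  case True
  define A where "A = Omega N \<inter> {x. x i - x j \<ge> int k \<and> gamma N i j x = g}"
  define A' where "A' = Omega N \<inter> {x. x i - x j \<ge> int k - 1}"
  have "infsum (gw N \<beta>) A \<le> exp (- \<beta> * real (card g)) * infsum (gw N \<beta>) A'"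
  proof (rule infsum_le_cmult_infsum_injective_image)
    show "inj_on (F N i j) A"
      by (rule inj_on_subset[OF inj_on_F[of N i j g]]) (simp add: A_def subset_iff)
    show "F N i j ` A \<subseteq> A'"
    proof
      fix y
      assume "y \<in> F N i j ` A"
      then obtain x where "x \<in> Omega N" "int k \<le> x i - x j" "y = F N i j x"
        unfolding A_def by blast
      then show "y \<in> A'"
        using F_in_Omega[of x i j] F_diff_ge[OF ij, of x] by (simp add: A'_def)
    qed
    show "gw N \<beta> summable_on A'"
      by (rule summable_on_subset_banach[OF True]) (auto simp: A'_def)
    show "gw N \<beta> x \<le> exp (- \<beta> * real (card g)) * gw N \<beta> (F N i j x)" if "x \<in> A" for x
      using gw_le_gw_F[OF ij(1) assms(3), where j = j and x = x] that by (simp add: A_def)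
  qed (simp_all add: gw_nonneg)
  then have "infsum (gw N \<beta>) A / Zpart N \<beta> \<le> exp (- \<beta> * real (card g)) * infsum (gw N \<beta>) A' / Zpart N \<beta>"
    by (rule divide_right_mono[OF _ Zpart_nonneg])
  then show ?thesis
    unfolding Prob_def A_def A'_def by simp
qed

lemma finite_Gamma:
  assumes "i \<in> torus N"
  shows "finite (Gamma N i j)"
proof -
  have "Gamma N i j \<subseteq> Pow (torus N \<times> units)"
  proof
    fix g
    assume "g \<in> Gamma N i j"
    then obtain x where "g = gamma N i j x"
      unfolding Gamma_def by blast
    interpret gamma_config N x i j
      by unfold_locales (rule assms)
    show "g \<in> Pow (torus N \<times> units)"
      using cyc.cycle_subset_bdry bdry_subset \<open>g = gamma N i j x\<close> by auto
  qed
  then show ?thesis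
    using finite_subset finite_torus finite_units by blast
qed

lemma Prob_ge_le:
  assumes ij: "i \<in> torus N" "j \<in> torus N" and "0 \<le> \<beta>" and "1 \<le> k"
  shows "Prob N \<beta> {x. x i - x j \<ge> int k}
           \<le> Prob N \<beta> {x. x i - x j \<ge> int k - 1} * (\<Sum>g\<in>Gamma N i j. exp (- \<beta> * real (card g)))"
proof -
  have "Prob N \<beta> {x. x i - x j \<ge> int k} = (\<Sum>g\<in>Gamma N i j. Prob N \<beta> {x. x i - x j \<ge> int k \<and> gamma N i j x = g})"
  proof (cases "gw N \<beta> summable_on Omega N")
    case False
    then show ?thesis
      using Prob_not_summable by simp
  next
    case True
    have "Omega N \<inter> {x. x i - x j \<ge> int k}
        = (\<Union>g\<in>Gamma N i j. Omega N \<inter> {x. x i - x j \<ge> int k \<and> gamma N i j x = g})"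
      using \<open>1 \<le> k\<close> unfolding Gamma_def Omega_ij_def by auto
    moreover have "gw N \<beta> summable_on (Omega N \<inter> {x. x i - x j \<ge> int k \<and> gamma N i j x = g})" for g
      by (rule summable_on_subset_banach[OF True]) auto
    ultimately show ?thesis
      unfolding Prob_def
      by (simp add: sum_infsum[OF finite_Gamma[OF ij(1)]] sum_divide_distrib[symmetric] disjoint_iff)
  qed
  also have "\<dots> \<le> (\<Sum>g\<in>Gamma N i j. exp (- \<beta> * real (card g)) * Prob N \<beta> {x. x i - x j \<ge> int k - 1})"
    by (rule sum_mono) (rule Prob_gamma_le[OF assms(1-3)])
  also have "\<dots> = Prob N \<beta> {x. x i - x j \<ge> int k - 1} * (\<Sum>g\<in>Gamma N i j. exp (- \<beta> * real (card g)))"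
    by (simp add: sum_distrib_right mult.commute)
  finally show ?thesis .
qed

lemma Prob_ge_le_power:
  assumes ij: "i \<in> torus N" "j \<in> torus N" and "0 \<le> \<beta>"
  shows "Prob N \<beta> {x. x i - x j \<ge> int k} \<le> (\<Sum>g\<in>Gamma N i j. exp (- \<beta> * real (card g))) ^ k"
proof (induction k)
  case 0
  then show ?case
    using Prob_le_1 by simp
next
  case (Suc k)
  let ?S = "\<Sum>g\<in>Gamma N i j. exp (- \<beta> * real (card g))"
  have "Prob N \<beta> {x. x i - x j \<ge> int (Suc k)} \<le> Prob N \<beta> {x. x i - x j \<ge> int k} * ?S"
    using Prob_ge_le[OF assms, of "Suc k"] by simp
  also have "\<dots> \<le> ?S ^ k * ?S"
    by (rule mult_right_mono[OF Suc.IH]) (simp add: sum_nonneg)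
  finally show ?case
    by (simp add: mult.commute)
qed

end

theorem mainTheorem5:
  fixes \<beta> :: real and N :: nat and i j :: vert
  assumes "\<beta> > 0" and "N \<ge> 4" and "i \<in> torus N" and "j \<in> torus N" and "i \<noteq> j"
  shows "(\<forall>x\<in>Omega_ij N i j. H N x - H N (F N i j x) \<ge> int (card (gamma N i j x)))
    \<and> (\<forall>g\<in>Gamma N i j. \<forall>k::nat. k \<ge> 1 \<longrightarrow>
         Prob N \<beta> {x. x i - x j \<ge> int k \<and> gamma N i j x = g}
           \<le> exp (- \<beta> * real (card g)) * Prob N \<beta> {x. x i - x j \<ge> int k - 1})
    \<and> (\<forall>k::nat. k \<ge> 1 \<longrightarrow>
         Prob N \<beta> {x. x i - x j \<ge> int k}
           \<le> Prob N \<beta> {x. x i - x j \<ge> int k - 1} * (\<Sum>g\<in>Gamma N i j. exp (- \<beta> * real (card g))))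
    \<and> (\<forall>k::nat. k \<ge> 1 \<longrightarrow>
         Prob N \<beta> {x. x i - x j \<ge> int k}
           \<le> (\<Sum>g\<in>Gamma N i j. exp (- \<beta> * real (card g))) ^ k)"
proof -
  interpret discrete_torus N
    using assms(2) by unfold_locales simp
  have "H N x - H N (F N i j x) \<ge> int (card (gamma N i j x))" for x
  proof -
    interpret gamma_config N x i j
      by unfold_locales (rule assms(3))
    show ?thesis
      by (rule energy_drop)
  qed
  then show ?thesis
    using Prob_gamma_le Prob_ge_le Prob_ge_le_power assms(1,3,4) by simp
qed

end
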